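(* Fix an integer $D\ge 21$. For a positive integer $n$, let $k=k(n)=\left\lceil \frac{3n\ln D}{D}\right\rceil$. Then the proportion of configurations $F\in\mathcal{F}_D(n)$ for which the multigraph $\pi(F)$ has an induced matching of size $k$ tends to $0$ as $n\to\infty$.
   Context: Let $n,D$ be positive integers and let $V_n=\{v_1,\dots,v_{nD}\}$ and $W_n=\{w_1,\dots,w_{nD}\}$ be disjoint sets. A configuration (of order $n$ and degree $D$) is a perfect matching between $V_n$ and $W_n$ (each edge has one end in $V_n$ and one in $W_n$); $\mathcal{F}_D(n)$ is the set of all $(Dn)!$ configurations. For $F\in\mathcal{F}_D(n)$, $\pi(F)$ is the $D$-regular bipartite multigraph with parts $X=\{x_1,\dots,x_n\}$ and $Y=\{y_1,\dots,y_n\}$ obtained by identifying, for each $j\in[n]$, the points $v_{D(j-1)+1},\dots,v_{Dj}$ into the vertex $x_j$ and the points $w_{D(j-1)+1},\dots,w_{Dj}$ into the vertex $y_j$; each pair of $F$ becomes an edge (parallel edges allowed). An induced matching of size $k$ in $\pi(F)$ is a set of $k$ pairwise vertex-disjoint edges such that the sub-multigraph of $\pi(F)$ induced on their $2k$ endpoints consists exactly of these $k$ edges (each of multiplicity one). $\ln$ is the natural logarithm. *)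

theory Defs
  imports "HOL-Analysis.Analysis" "HOL-Combinatorics.Permutations"
begin

text \<open>Points v_1..v_{nD} and w_1..w_{nD} are indexed by 0..nD-1. A configuration
  (perfect matching between V_n and W_n) is a bijection sigma of {..<n*D}:
  point v_i is paired with w_{sigma i}.
  Point i belongs to vertex x_{i div D} (resp. y_{i div D}).\<close>

definition configs :: "nat \<Rightarrow> nat \<Rightarrow> (nat \<Rightarrow> nat) set" where
  "configs D n = {\<sigma>. \<sigma> permutes {..<n*D}}"

text \<open>The edges of pi(F) are the pairs of F, indexed by their V-point i < nD;
  edge i joins x_{i div D} and y_{sigma i div D}. An induced matching of size k is a set S
  of k edges that are pairwise vertex-disjoint and such that every edge of pi(F) with both
  endpoints among the endpoints of S belongs to S (so the induced sub-multigraph consists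
  exactly of the edges of S, each with multiplicity one).\<close>

definition induced_matching :: "nat \<Rightarrow> nat \<Rightarrow> (nat \<Rightarrow> nat) \<Rightarrow> nat set \<Rightarrow> bool" where
  "induced_matching D n \<sigma> S \<longleftrightarrow>
     S \<subseteq> {..<n*D} \<and>
     inj_on (\<lambda>i. i div D) S \<and> inj_on (\<lambda>i. \<sigma> i div D) S \<and>
     (\<forall>j<n*D. j div D \<in> (\<lambda>i. i div D) ` S \<and> \<sigma> j div D \<in> (\<lambda>i. \<sigma> i div D) ` S \<longrightarrow> j \<in> S)"

definition has_induced_matching :: "nat \<Rightarrow> nat \<Rightarrow> (nat \<Rightarrow> nat) \<Rightarrow> nat \<Rightarrow> bool" where
  "has_induced_matching D n \<sigma> k \<longleftrightarrow> (\<exists>S. induced_matching D n \<sigma> S \<and> card S = k)"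

end

theory Submission
  imports Defs
begin

text \<open>If S is an induced matching of size k in \<pi>(F), with x-endpoints A and y-endpoints B, then
  none of the kD - k points of the vertices in A that are not covered by S is paired with a point
  of a vertex in B. For fixed A, B and such a set P of points, the proportion of configurations
  pairing P only with points outside B is at most (1 - k/n)^(kD - k). A union bound over A, B
  and P bounds the proportion of configurations with an induced matching of size k by
  binom(n,k)^2 binom(kD,k) (1 - k/n)^(kD - k) \<le> b^k, where for \<alpha> = 3 ln D / D the base
  b = (e/\<alpha>)^2 eD exp(-\<alpha>(D - 1)) = e^3 exp(\<alpha>) / (9 ln^2 D) is less than 1 once D \<ge> 21.\<close>

lemma permutes_exists_image_eq:
  assumes "finite U" "P \<subseteq> U" "P' \<subseteq> U" "card P = card P'"
  shows "\<exists>\<rho>. \<rho> permutes U \<and> \<rho> ` P = P'"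
proof -
  have "finite P" "finite P'"
    using assms finite_subset by auto
  then obtain f where f: "bij_betw f P P'"
    using assms(4) finite_same_card_bij by blast
  have "card (U - P) = card (U - P')"
    using assms \<open>finite P\<close> \<open>finite P'\<close> by (simp add: card_Diff_subset)
  then obtain g where g: "bij_betw g (U - P) (U - P')"
    using assms(1) finite_same_card_bij by (meson finite_Diff)
  define \<rho> where "\<rho> x = (if x \<in> P then f x else if x \<in> U then g x else x)" for x
  have "bij_betw \<rho> P P'"
    using f by (rule bij_betw_cong[THEN iffD1, rotated]) (simp add: \<rho>_def)
  moreover have "bij_betw \<rho> (U - P) (U - P')"
    using g by (rule bij_betw_cong[THEN iffD1, rotated]) (simp add: \<rho>_def)
  ultimately have "bij_betw \<rho> (P \<union> (U - P)) (P' \<union> (U - P'))"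
    by (rule bij_betw_combine) auto
  then have "\<rho> permutes U"
    using assms(2,3) by (intro bij_imp_permutes) (auto simp: \<rho>_def Un_absorb1)
  with \<open>bij_betw \<rho> P P'\<close> show ?thesis by (auto simp: bij_betw_def)
qed

lemma card_permutes_image_subset_le:
  assumes "finite U" "P \<subseteq> U" "P' \<subseteq> U" "card P = card P'"
  shows "card {\<sigma>. \<sigma> permutes U \<and> \<sigma> ` P \<subseteq> Q} \<le> card {\<sigma>. \<sigma> permutes U \<and> \<sigma> ` P' \<subseteq> Q}"
proof -
  obtain \<rho> where \<rho>: "\<rho> permutes U" "\<rho> ` P' = P"
    using permutes_exists_image_eq[OF assms(1,3,2) assms(4)[symmetric]] by blast
  have "inj_on (\<lambda>\<sigma>. \<sigma> \<circ> \<rho>) {\<sigma>. \<sigma> permutes U \<and> \<sigma> ` P \<subseteq> Q}"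
  proof (rule inj_onI)
    fix s t assume "s \<circ> \<rho> = t \<circ> \<rho>"
    then have "s \<circ> (\<rho> \<circ> inv \<rho>) = t \<circ> (\<rho> \<circ> inv \<rho>)" by (metis comp_assoc)
    then show "s = t" using permutes_surj[OF \<rho>(1)] by (simp add: surj_iff)
  qed
  moreover have "(\<lambda>\<sigma>. \<sigma> \<circ> \<rho>) ` {\<sigma>. \<sigma> permutes U \<and> \<sigma> ` P \<subseteq> Q}
      \<subseteq> {\<sigma>. \<sigma> permutes U \<and> \<sigma> ` P' \<subseteq> Q}"
    using \<rho> by (auto simp: permutes_compose image_comp[symmetric])
  moreover have "finite {\<sigma>. \<sigma> permutes U \<and> \<sigma> ` P' \<subseteq> Q}"
    using finite_permutations[OF assms(1)] by (rule finite_subset[rotated]) auto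
  ultimately show ?thesis by (rule card_inj_on_le)
qed

lemma card_permutes_image_subset_cong:
  assumes "finite U" "P \<subseteq> U" "P' \<subseteq> U" "card P = card P'"
  shows "card {\<sigma>. \<sigma> permutes U \<and> \<sigma> ` P \<subseteq> Q} = card {\<sigma>. \<sigma> permutes U \<and> \<sigma> ` P' \<subseteq> Q}"
  using card_permutes_image_subset_le[OF assms]
    card_permutes_image_subset_le[OF assms(1,3,2) assms(4)[symmetric]]
  by (rule antisym)

lemma card_subsets_image_subset:
  assumes "finite U" "\<sigma> permutes U" "Q \<subseteq> U"
  shows "card {P. P \<subseteq> U \<and> card P = m \<and> \<sigma> ` P \<subseteq> Q} = card Q choose m"
proof -
  have "\<sigma> -` Q \<subseteq> U"
    using assms(3) permutes_in_image[OF assms(2)] by auto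
  then have "{P. P \<subseteq> U \<and> card P = m \<and> \<sigma> ` P \<subseteq> Q} = {P. P \<subseteq> \<sigma> -` Q \<and> card P = m}"
    by blast
  moreover have "finite (\<sigma> -` Q)"
    using \<open>\<sigma> -` Q \<subseteq> U\<close> assms(1) finite_subset by blast
  moreover have "card (\<sigma> -` Q) = card Q"
    using assms(2) by (intro card_vimage_inj) (auto simp: permutes_inj permutes_surj)
  ultimately show ?thesis by (simp add: n_subsets)
qed

lemma card_permutes_image_subset:
  assumes "finite U" "P \<subseteq> U" "Q \<subseteq> U"
  shows "card {\<sigma>. \<sigma> permutes U \<and> \<sigma> ` P \<subseteq> Q} * (card U choose card P)
    = fact (card U) * (card Q choose card P)"
proof -
  \<comment> \<open>Double counting of the pairs (\<sigma>, P') with card P' = card P and \<sigma> ` P' \<subseteq> Q\<close>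
  define Ps where "Ps = {P'. P' \<subseteq> U \<and> card P' = card P}"
  define Pm where "Pm = {\<sigma>. \<sigma> permutes U}"
  have "finite Ps" unfolding Ps_def using assms(1) by simp
  have "finite Pm" unfolding Pm_def using assms(1) by (rule finite_permutations)
  have "card {\<sigma>. \<sigma> permutes U \<and> \<sigma> ` P \<subseteq> Q} * (card U choose card P)
      = (\<Sum>P'\<in>Ps. card {\<sigma>\<in>Pm. \<sigma> ` P' \<subseteq> Q})"
    using card_permutes_image_subset_cong[OF assms(1) _ assms(2)]
    by (simp add: Ps_def Pm_def n_subsets[OF assms(1)] mult.commute)
  also have "\<dots> = (\<Sum>\<sigma>\<in>Pm. card {P'\<in>Ps. \<sigma> ` P' \<subseteq> Q})"
    using sum.swap_restrict[OF \<open>finite Ps\<close> \<open>finite Pm\<close>, of "\<lambda>_ _. 1::nat"]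
    by simp
  also have "\<dots> = fact (card U) * (card Q choose card P)"
    using card_subsets_image_subset[OF assms(1) _ assms(3)] card_permutations[OF refl assms(1)]
    by (simp add: Ps_def Pm_def conj_assoc)
  finally show ?thesis .
qed

lemma binomial_mult_pow_le:
  assumes "q \<le> N"
  shows "(q choose m) * N ^ m \<le> (N choose m) * q ^ m"
proof (induction m)
  case 0
  then show ?case by simp
next
  case (Suc m)
  have step: "Suc m * ((n choose Suc m) * x ^ Suc m) = ((n - m) * x) * ((n choose m) * x ^ m)"
    for n x :: nat
    by (simp only: mult.assoc[symmetric] binomial_absorption binomial_absorb_comp[symmetric])
      (simp add: mult_ac)
  have "(q - m) * N = q * N - m * N"
    by (simp add: diff_mult_distrib)
  also have "\<dots> \<le> q * N - m * q"
    using assms by (intro diff_le_mono2) simp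
  also have "\<dots> = (N - m) * q"
    by (simp add: diff_mult_distrib mult.commute[of q N])
  finally have "(q - m) * N \<le> (N - m) * q" .
  then have "((q - m) * N) * ((q choose m) * N ^ m) \<le> ((N - m) * q) * ((N choose m) * q ^ m)"
    using Suc.IH by (rule mult_mono) auto
  then have "Suc m * ((q choose Suc m) * N ^ Suc m) \<le> Suc m * ((N choose Suc m) * q ^ Suc m)"
    by (simp only: step)
  then show ?case by (simp only: mult_le_cancel1)
qed

lemma card_permutes_image_subset_le_pow:
  assumes "finite U" "P \<subseteq> U" "Q \<subseteq> U" "U \<noteq> {}"
  shows "real (card {\<sigma>. \<sigma> permutes U \<and> \<sigma> ` P \<subseteq> Q})
    \<le> fact (card U) * (card Q / card U) ^ card P"
proof -
  define c where "c = card {\<sigma>. \<sigma> permutes U \<and> \<sigma> ` P \<subseteq> Q}"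
  have "card P \<le> card U" "card Q \<le> card U" "card U > 0"
    using assms by (auto intro: card_mono simp: card_gt_0_iff)
  then have pos: "real (card U choose card P) * card U ^ card P > 0" by simp
  have "real c * (real (card U choose card P) * card U ^ card P)
      = fact (card U) * (real (card Q choose card P) * card U ^ card P)"
    using arg_cong[OF card_permutes_image_subset[OF assms(1-3)], of real]
    by (simp add: c_def algebra_simps)
  also have "\<dots> \<le> fact (card U) * (real (card U choose card P) * card Q ^ card P)"
    using binomial_mult_pow_le[OF \<open>card Q \<le> card U\<close>, of "card P"]
    by (intro mult_left_mono) (simp_all flip: of_nat_mult of_nat_power)
  also have "\<dots> = fact (card U) * (card Q / card U) ^ card P
      * (real (card U choose card P) * card U ^ card P)"
    using \<open>card U > 0\<close> by (simp add: power_divide field_simps)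
  finally show ?thesis
    unfolding c_def using pos by (simp only: mult_le_cancel_right_pos)
qed

definition points_of :: "nat \<Rightarrow> nat set \<Rightarrow> nat set" where
  "points_of D A = {i. i div D \<in> A}"

lemma bij_betw_points_of:
  assumes "D > 0"
  shows "bij_betw (\<lambda>(a, r). a * D + r) (A \<times> {..<D}) (points_of D A)"
proof (rule bij_betw_byWitness[where f' = "\<lambda>i. (i div D, i mod D)"])
qed (use assms in \<open>auto simp: points_of_def\<close>)

lemma card_points_of:
  assumes "D > 0" "finite A"
  shows "card (points_of D A) = D * card A"
  using bij_betw_same_card[OF bij_betw_points_of[OF assms(1)]] assms(2)
  by (simp add: card_cartesian_product mult.commute)

lemma finite_points_of:
  assumes "D > 0" "finite A"
  shows "finite (points_of D A)"
  using bij_betw_finite[OF bij_betw_points_of[OF assms(1)]] assms(2)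
  by (metis finite_cartesian_product finite_lessThan)

lemma points_of_subset_lessThan:
  assumes "D > 0" "A \<subseteq> {..<n}"
  shows "points_of D A \<subseteq> {..<n * D}"
  using assms by (auto simp: points_of_def div_less_iff_less_mult)

lemma induced_matching_witness:
  assumes "D > 0" "\<sigma> permutes {..<n * D}" "induced_matching D n \<sigma> S"
  obtains A B P where "A \<subseteq> {..<n}" "card A = card S" "B \<subseteq> {..<n}" "card B = card S"
    "P \<subseteq> points_of D A" "card P = card S * D - card S"
    "\<sigma> ` P \<subseteq> {..<n * D} - points_of D B"
proof
  define A where "A = (\<lambda>i. i div D) ` S"
  define B where "B = (\<lambda>i. \<sigma> i div D) ` S"
  have S: "S \<subseteq> {..<n * D}" "inj_on (\<lambda>i. i div D) S" "inj_on (\<lambda>i. \<sigma> i div D) S"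
    and induced: "\<And>j. j < n * D \<Longrightarrow> j div D \<in> A \<Longrightarrow> \<sigma> j div D \<in> B \<Longrightarrow> j \<in> S"
    using assms(3) unfolding induced_matching_def A_def B_def by blast+
  show "A \<subseteq> {..<n}" "card A = card S"
    using S assms(1) by (auto simp: A_def card_image div_less_iff_less_mult)
  show "B \<subseteq> {..<n}" "card B = card S"
    using S assms(1) permutes_in_image[OF assms(2)]
    by (auto simp: B_def card_image div_less_iff_less_mult)
  have "S \<subseteq> points_of D A" "finite A"
    using \<open>A \<subseteq> {..<n}\<close> by (auto simp: points_of_def A_def finite_subset)
  then show "card (points_of D A - S) = card S * D - card S"
    using \<open>card A = card S\<close> card_Diff_subset[OF finite_subset[OF S(1)]]
    by (simp add: card_points_of[OF assms(1)] mult.commute)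
  show "points_of D A - S \<subseteq> points_of D A" by blast
  show "\<sigma> ` (points_of D A - S) \<subseteq> {..<n * D} - points_of D B"
  proof
    fix y assume "y \<in> \<sigma> ` (points_of D A - S)"
    then obtain j where j: "j \<in> points_of D A" "j \<notin> S" "y = \<sigma> j" by blast
    then have "j < n * D"
      using points_of_subset_lessThan[OF assms(1) \<open>A \<subseteq> {..<n}\<close>] by blast
    then have "y < n * D"
      using j(3) permutes_in_image[OF assms(2)] by simp
    moreover have "y \<notin> points_of D B"
      using induced[OF \<open>j < n * D\<close>] j by (auto simp: points_of_def)
    ultimately show "y \<in> {..<n * D} - points_of D B" by simp
  qed
qed

lemma card_permutes_avoiding_points_le:
  assumes "D > 0" "n > 0" "B \<subseteq> {..<n}" "P \<subseteq> {..<n * D}"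
  shows "real (card {\<sigma>. \<sigma> permutes {..<n * D} \<and> \<sigma> ` P \<subseteq> {..<n * D} - points_of D B})
    \<le> fact (n * D) * (1 - card B / n) ^ card P"
proof -
  have "points_of D B \<subseteq> {..<n * D}" "finite B"
    using assms points_of_subset_lessThan finite_subset[OF assms(3)] by auto
  then have "card ({..<n * D} - points_of D B) = n * D - card B * D"
    by (simp add: card_Diff_subset finite_points_of[OF assms(1)] card_points_of[OF assms(1)]
        mult.commute)
  moreover have "card B \<le> n"
    using card_mono[OF _ assms(3)] by simp
  ultimately have "real (card ({..<n * D} - points_of D B)) / real (n * D) = 1 - card B / n"
    using assms(1,2) by (simp add: of_nat_diff field_simps)
  moreover have "{..<n * D} \<noteq> {}"
    using assms(1,2) by (simp add: lessThan_empty_iff)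
  ultimately show ?thesis
    using card_permutes_image_subset_le_pow[OF _ assms(4), of "{..<n * D} - points_of D B"]
    by simp
qed

lemma card_UN_le_card_mult:
  fixes c :: real
  assumes "finite I" "\<And>i. i \<in> I \<Longrightarrow> real (card (F i)) \<le> c"
  shows "real (card (\<Union>i\<in>I. F i)) \<le> card I * c"
proof -
  have "real (card (\<Union>i\<in>I. F i)) \<le> (\<Sum>i\<in>I. real (card (F i)))"
    using card_UN_le[OF assms(1)] by (simp flip: of_nat_sum)
  also have "\<dots> \<le> card I * c"
    using assms(2) by (rule sum_bounded_above)
  finally show ?thesis .
qed

lemma card_configs_induced_matching_le:
  assumes "D > 0" "n > 0"
  shows "real (card {\<sigma> \<in> configs D n. has_induced_matching D n \<sigma> k})
    \<le> real (n choose k) ^ 2 * real (k * D choose k) * fact (n * D) * (1 - k / n) ^ (k * D - k)"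
proof -
  define Ks where "Ks = {A. A \<subseteq> {..<n} \<and> card A = k}"
  define Ps where "Ps A = {P. P \<subseteq> points_of D A \<and> card P = k * D - k}" for A
  define E where
    "E B P = {\<sigma>. \<sigma> permutes {..<n * D} \<and> \<sigma> ` P \<subseteq> {..<n * D} - points_of D B}" for B P
  define c where "c = fact (n * D) * (1 - k / n) ^ (k * D - k)"
  have "{\<sigma> \<in> configs D n. has_induced_matching D n \<sigma> k}
      \<subseteq> (\<Union>A\<in>Ks. \<Union>B\<in>Ks. \<Union>P\<in>Ps A. E B P)"
  proof
    fix \<sigma> assume "\<sigma> \<in> {\<sigma> \<in> configs D n. has_induced_matching D n \<sigma> k}"
    then obtain S where \<sigma>: "\<sigma> permutes {..<n * D}"
      and S: "induced_matching D n \<sigma> S" "card S = k"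
      by (auto simp: configs_def has_induced_matching_def)
    obtain A B P where "A \<in> Ks" "B \<in> Ks" "P \<in> Ps A" "\<sigma> \<in> E B P"
    proof (rule induced_matching_witness[OF assms(1) \<sigma> S(1)])
    qed (use \<sigma> in \<open>simp_all add: Ks_def Ps_def E_def S(2)\<close>)
    then show "\<sigma> \<in> (\<Union>A\<in>Ks. \<Union>B\<in>Ks. \<Union>P\<in>Ps A. E B P)" by blast
  qed
  moreover have "finite (\<Union>A\<in>Ks. \<Union>B\<in>Ks. \<Union>P\<in>Ps A. E B P)"
    by (rule finite_subset[OF _ finite_permutations[of "{..<n * D}"]]) (auto simp: E_def)
  ultimately have "real (card {\<sigma> \<in> configs D n. has_induced_matching D n \<sigma> k})
      \<le> real (card (\<Union>A\<in>Ks. \<Union>B\<in>Ks. \<Union>P\<in>Ps A. E B P))"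
    by (simp add: card_mono)
  also have "\<dots> \<le> card Ks * (card Ks * (real (k * D choose k) * c))"
  proof (intro card_UN_le_card_mult)
    fix A B assume A: "A \<in> Ks" and B: "B \<in> Ks"
    have "finite A" "points_of D A \<subseteq> {..<n * D}"
      using A assms(1) points_of_subset_lessThan by (auto simp: Ks_def finite_subset)
    then have "card (Ps A) = k * D choose k"
      using A assms(1) binomial_symmetric[of k "k * D"]
      by (simp add: Ps_def Ks_def n_subsets finite_points_of card_points_of mult.commute)
    moreover have "real (card (E B P)) \<le> c" if "P \<in> Ps A" for P
      using card_permutes_avoiding_points_le[OF assms, of B P] B that \<open>points_of D A \<subseteq> _\<close>
      by (auto simp: E_def Ks_def Ps_def c_def)
    ultimately show "real (card (\<Union>P\<in>Ps A. E B P)) \<le> real (k * D choose k) * c"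
      using card_UN_le_card_mult[of "Ps A" "E B" c] \<open>finite A\<close> assms(1)
      by (simp add: Ps_def finite_points_of)
  qed (simp_all add: Ks_def)
  also have "\<dots> = real (n choose k) ^ 2 * real (k * D choose k) * c"
    by (simp add: Ks_def n_subsets power2_eq_square)
  finally show ?thesis
    by (simp add: c_def mult.assoc)
qed

lemma pow_div_fact_le_exp:
  fixes x :: real
  assumes "x \<ge> 0"
  shows "x ^ k / fact k \<le> exp x"
proof -
  have "(\<lambda>j. x ^ j /\<^sub>R fact j) sums exp x"
    by (rule exp_converges)
  moreover have "(\<Sum>j\<in>{k}. x ^ j /\<^sub>R fact j) \<le> (\<Sum>j. x ^ j /\<^sub>R fact j)"
    using calculation assms by (intro sum_le_suminf) (auto simp: sums_iff)
  ultimately show ?thesis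
    by (simp add: sums_iff divide_inverse_commute)
qed

lemma binomial_le_exp_mult_div_pow: "real (n choose k) \<le> (exp 1 * n / k) ^ k"
proof (cases "k = 0")
  case False
  have "real (n choose k) \<le> real n ^ k / fact k"
    using binomial_fact_pow[of n k]
    by (simp add: field_simps) (metis of_nat_fact of_nat_le_iff of_nat_mult of_nat_power)
  also have "\<dots> = (n / k) ^ k * (real k ^ k / fact k)"
    using False by (simp add: power_divide)
  also have "\<dots> \<le> (n / k) ^ k * exp 1 ^ k"
    using pow_div_fact_le_exp[of "real k" k] exp_of_nat_mult[of k "1::real"]
    by (intro mult_left_mono) auto
  also have "\<dots> = (exp 1 * n / k) ^ k"
    by (simp add: power_divide power_mult_distrib)
  finally show ?thesis .
qed simp

text \<open>For k \<ge> \<alpha> n, the three factors e/\<alpha>, e D and exp(-\<alpha>(D - 1)) bound the k-th roots of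
  binom(n,k), binom(kD,k) and (1 - k/n)^(kD - k), respectively.\<close>

definition matching_base :: "real \<Rightarrow> real \<Rightarrow> real" where
  "matching_base D \<alpha> = (exp 1 / \<alpha>) ^ 2 * (exp 1 * D) * exp (- \<alpha> * (D - 1))"

lemma matching_base_antimono:
  assumes "0 < \<alpha>" "\<alpha> \<le> t" "D \<ge> 1"
  shows "matching_base D t \<le> matching_base D \<alpha>"
proof -
  have "(exp 1 / t) ^ 2 \<le> (exp 1 / \<alpha>) ^ 2"
    using assms by (intro power_mono divide_left_mono) auto
  moreover have "exp (- t * (D - 1)) \<le> exp (- \<alpha> * (D - 1))"
    using assms by (simp add: mult_right_mono)
  ultimately show ?thesis
    unfolding matching_base_def using assms by (intro mult_mono) auto
qed

lemma first_moment_le_matching_base_pow: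
  assumes "D > 0" "\<alpha> > 0" "\<alpha> * n \<le> k"
  shows "real (n choose k) ^ 2 * real (k * D choose k) * (1 - k / n) ^ (k * D - k)
    \<le> matching_base D \<alpha> ^ k"
proof -
  consider "k = 0" | "n < k" | "0 < k" "k \<le> n" by linarith
  then show ?thesis
  proof cases
    case 2
    then show ?thesis by (simp add: binomial_eq_0 matching_base_def)
  next
    case 3
    define t where "t = real k / n"
    have t: "\<alpha> \<le> t" "0 < t" "t \<le> 1"
      using assms 3 by (auto simp: t_def field_simps)
    have "real (n choose k) \<le> (exp 1 / t) ^ k"
      using binomial_le_exp_mult_div_pow[of n k] by (simp add: t_def)
    moreover have "real (k * D choose k) \<le> (exp 1 * D) ^ k"
      using binomial_le_exp_mult_div_pow[of "k * D" k] 3 by simp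
    moreover have "(1 - t) ^ (k * D - k) \<le> exp (- t * (real D - 1)) ^ k"
    proof -
      have "(1 - t) ^ (k * D - k) = ((1 - t) ^ (D - 1)) ^ k"
        by (simp add: power_mult[symmetric] diff_mult_distrib mult.commute[of k D])
      also have "\<dots> \<le> (exp (- t) ^ (D - 1)) ^ k"
        using t exp_ge_add_one_self[of "- t"] by (intro power_mono) auto
      also have "exp (- t) ^ (D - 1) = exp (- t * (real D - 1))"
        using assms(1) exp_of_nat_mult[of "D - 1" "- t"] by (simp add: of_nat_diff mult.commute)
      finally show ?thesis .
    qed
    ultimately have "real (n choose k) ^ 2 * real (k * D choose k) * (1 - t) ^ (k * D - k)
        \<le> ((exp 1 / t) ^ k) ^ 2 * (exp 1 * D) ^ k * exp (- t * (real D - 1)) ^ k"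
      using t by (intro mult_mono power_mono) auto
    also have "\<dots> = matching_base D t ^ k"
      by (simp add: matching_base_def power_mult_distrib power_mult[symmetric] mult.commute)
    also have "\<dots> \<le> matching_base D \<alpha> ^ k"
      using t assms by (intro power_mono matching_base_antimono) (auto simp: matching_base_def)
    finally show ?thesis by (simp add: t_def)
  qed simp
qed

lemma induced_matching_proportion_le:
  assumes "D > 0" "n > 0" "\<alpha> > 0" "\<alpha> * n \<le> k"
  shows "card {\<sigma> \<in> configs D n. has_induced_matching D n \<sigma> k} / card (configs D n)
    \<le> matching_base D \<alpha> ^ k"
proof -
  have "card (configs D n) = fact (n * D)"
    unfolding configs_def by (rule card_permutations) simp_all
  then show ?thesis
    using card_configs_induced_matching_le[OF assms(1,2), of k]
      first_moment_le_matching_base_pow[OF assms(1,3,4)]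
    by (simp add: divide_le_eq mult.commute mult.left_commute order_trans)
qed

lemma ln_le_div_exp_one:
  fixes x :: real
  assumes "x > 0"
  shows "ln x \<le> x / exp 1"
  using ln_le_minus_one[of "x / exp 1"] assms by (simp add: ln_div)

lemma matching_base_log_eq:
  fixes D :: real
  assumes "D > 0"
  shows "matching_base D (3 * ln D / D) = exp 1 ^ 3 * exp (3 * ln D / D) / (9 * ln D ^ 2)"
proof -
  have "exp (3 * ln D) = D ^ 3"
    using exp_of_nat_mult[of 3 "ln D"] assms by simp
  moreover have "- (3 * ln D / D) * (D - 1) = 3 * ln D / D - 3 * ln D"
    using assms by (simp add: field_simps)
  ultimately have "exp (- (3 * ln D / D) * (D - 1)) = exp (3 * ln D / D) / D ^ 3"
    by (simp add: exp_diff)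
  then show ?thesis
    using assms by (simp add: matching_base_def field_simps power2_eq_square power3_eq_cube)
qed

lemma matching_base_lt_one:
  fixes D :: real
  assumes "D \<ge> 21"
  shows "matching_base D (3 * ln D / D) < 1"
proof -
  define L where "L = ln D"
  have e: "2718 / 1000 < exp (1::real)" "exp (1::real) < 272 / 100"
    using e_approx_32 e_less_272 by (auto simp: abs_if split: if_splits)
  have "exp 3 < D"
    using exp_of_nat_mult[of 3 "1::real"] power_strict_mono[OF e(2), of 3] assms
    by (simp add: power3_eq_cube)
  then have "3 \<le> L"
    using assms by (simp add: L_def ln_ge_iff)
  have "3 * L / D \<le> 3 / exp 1"
    using ln_le_div_exp_one[of D] assms by (simp add: L_def field_simps)
  also have "\<dots> \<le> 1 + 11 / 100"
    using e by (simp add: field_simps)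
  finally have "exp 1 ^ 3 * exp (3 * L / D) \<le> exp 1 ^ 3 * (exp 1 * exp (11 / 100))"
    by (simp flip: exp_add)
  also have "\<dots> \<le> exp 1 ^ 4 * (1 + 2 * (11 / 100))"
    using exp_bound_lemma[of "11 / 100 :: real"] by (simp add: power4_eq_xxxx power3_eq_cube)
  also have "\<dots> < 81"
    using power_strict_mono[OF e(2), of 4] by (simp add: power4_eq_xxxx)
  also have "81 \<le> 9 * L ^ 2"
    using power_mono[OF \<open>3 \<le> L\<close>, of 2] by simp
  finally show ?thesis
    using assms \<open>3 \<le> L\<close> by (simp add: matching_base_log_eq L_def)
qed

lemma filterlim_nat_ceiling_mult_sequentially:
  fixes c :: real
  assumes "c > 0"
  shows "filterlim (\<lambda>n. nat \<lceil>c * real n\<rceil>) at_top sequentially"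
proof -
  have "filterlim (\<lambda>n. nat \<lfloor>c * real n\<rfloor>) at_top sequentially"
    by (intro filterlim_compose[OF filterlim_nat_sequentially]
        filterlim_compose[OF filterlim_floor_sequentially]
        filterlim_tendsto_pos_mult_at_top[OF tendsto_const assms filterlim_real_sequentially])
  then show ?thesis
    by (rule filterlim_at_top_mono) (auto intro!: always_eventually nat_mono floor_le_ceiling)
qed

theorem lemma4p4:
  fixes D :: nat
  assumes "D \<ge> 21"
  shows "(\<lambda>n. real (card {\<sigma> \<in> configs D n.
              has_induced_matching D n \<sigma> (nat \<lceil>3 * real n * ln (real D) / real D\<rceil>)})
            / real (card (configs D n))) \<longlonglongrightarrow> 0"
proof -
  define \<alpha> where "\<alpha> = 3 * ln (real D) / real D"
  define k where "k n = nat \<lceil>\<alpha> * real n\<rceil>" for n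
  have "\<alpha> > 0"
    using assms by (simp add: \<alpha>_def)
  have "0 \<le> matching_base D \<alpha>" "matching_base D \<alpha> < 1"
    using matching_base_lt_one[of D] assms by (simp_all add: matching_base_def \<alpha>_def)
  then have upper_lim: "(\<lambda>n. matching_base D \<alpha> ^ k n) \<longlonglongrightarrow> 0"
    unfolding k_def using filterlim_nat_ceiling_mult_sequentially[OF \<open>\<alpha> > 0\<close>]
    by (intro filterlim_compose[OF LIMSEQ_power_zero]) simp_all
  have upper: "\<forall>\<^sub>F n in sequentially.
      card {\<sigma> \<in> configs D n. has_induced_matching D n \<sigma> (k n)} / card (configs D n)
        \<le> matching_base D \<alpha> ^ k n"
    using eventually_gt_at_top[of 0]
    by eventually_elim
      (use assms \<open>\<alpha> > 0\<close> in
        \<open>simp_all add: induced_matching_proportion_le k_def real_nat_ceiling_ge\<close>)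
  have lower: "\<forall>\<^sub>F n in sequentially.
      0 \<le> card {\<sigma> \<in> configs D n. has_induced_matching D n \<sigma> (k n)} / card (configs D n)"
    by simp
  have "nat \<lceil>3 * real n * ln (real D) / real D\<rceil> = k n" for n
    by (simp add: k_def \<alpha>_def mult_ac)
  then show ?thesis
    using tendsto_sandwich[OF lower upper tendsto_const upper_lim] by (simp only:)
qed

end
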